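(* For every skew shape $\lambda/\mu$ and every $k$, there is a double weight preserving bijection from the set of primed tableaux of shape $\lambda/\mu$ over $X'_k$ to the set of signed tableaux of shape $\lambda/\mu$ over $\bar X_k$.
   Context: A primed tableau of shape $\lambda/\mu$ over $X'_k=\{1'<1<2'<2<\dots<k'<k\}$ is a filling of the skew diagram with rows and columns weakly increasing, at most one $i'$ in each row and at most one $i$ in each column for every $i$; its double weight is $(X,Y)$ where $X(i)$ is the number of entries $i'$ and $Y(i)$ the number of entries $i$. A signed tableau of shape $\lambda/\mu$ over $\bar X_k=\{\bar k<\dots<\bar1<1<\dots<k\}$ is a filling with rows and columns weakly increasing, at most one $\bar i$ in each row and at most one $i$ in each column for every $i$; its double weight is $(X,Y)$ where $X(i)$ is the number of entries $\bar i$ and $Y(i)$ the number of entries $i$. *)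

theory Defs
  imports Main
begin

text \<open>Partitions are weakly decreasing lists of naturals; parts beyond the
length are 0.\<close>

definition is_partition :: "nat list \<Rightarrow> bool" where
  "is_partition lam \<longleftrightarrow> sorted (rev lam)"

definition part :: "nat list \<Rightarrow> nat \<Rightarrow> nat" where
  "part lam i = (if i < length lam then lam ! i else 0)"

definition skew_shape :: "nat list \<Rightarrow> nat list \<Rightarrow> bool" where
  "skew_shape lam mu \<longleftrightarrow> is_partition lam \<and> is_partition mu \<and>
     (\<forall>i. part mu i \<le> part lam i)"

text \<open>Cells (row, column), 0-indexed, in English convention.\<close>
definition cells :: "nat list \<Rightarrow> nat list \<Rightarrow> (nat \<times> nat) set" where
  "cells lam mu = {(i, j). part mu i \<le> j \<and> j < part lam i}"

text \<open>A letter is a pair (i, marked).  In the primed alphabet (i, True) is i'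
and (i, False) is i; in the signed alphabet (i, True) is bar i and (i, False) is i.
Both alphabets consist of the letters with 1 \<le> i \<le> k; they differ in their order.\<close>
type_synonym letter = "nat \<times> bool"

definition in_alphabet :: "nat \<Rightarrow> letter \<Rightarrow> bool" where
  "in_alphabet k a \<longleftrightarrow> 1 \<le> fst a \<and> fst a \<le> k"

text \<open>Order on X'_k = 1' < 1 < 2' < 2 < ... : i' has rank 2i-1, i has rank 2i.\<close>
definition rank_primed :: "letter \<Rightarrow> int" where
  "rank_primed a = 2 * int (fst a) - (if snd a then 1 else 0)"

text \<open>Order on bar X_k = bar k < ... < bar 1 < 1 < ... < k : bar i has rank -i, i has rank i.\<close>
definition rank_signed :: "letter \<Rightarrow> int" where
  "rank_signed a = (if snd a then - int (fst a) else int (fst a))"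

type_synonym filling = "nat \<times> nat \<Rightarrow> letter option"

definition tableau_wrt :: "(letter \<Rightarrow> int) \<Rightarrow> nat list \<Rightarrow> nat list \<Rightarrow> nat \<Rightarrow> filling \<Rightarrow> bool" where
  "tableau_wrt rk lam mu k T \<longleftrightarrow>
     (\<forall>c. (T c \<noteq> None) \<longleftrightarrow> c \<in> cells lam mu) \<and>
     (\<forall>c a. T c = Some a \<longrightarrow> in_alphabet k a) \<and>
     (\<forall>i j j' a b. T (i, j) = Some a \<and> T (i, j') = Some b \<and> j \<le> j' \<longrightarrow> rk a \<le> rk b) \<and>
     (\<forall>i i' j a b. T (i, j) = Some a \<and> T (i', j) = Some b \<and> i \<le> i' \<longrightarrow> rk a \<le> rk b) \<and>
     (\<forall>r v. card {j. T (r, j) = Some (v, True)} \<le> 1) \<and>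
     (\<forall>col v. card {i. T (i, col) = Some (v, False)} \<le> 1)"

definition primed_tableaux :: "nat list \<Rightarrow> nat list \<Rightarrow> nat \<Rightarrow> filling set" where
  "primed_tableaux lam mu k = {T. tableau_wrt rank_primed lam mu k T}"

definition signed_tableaux :: "nat list \<Rightarrow> nat list \<Rightarrow> nat \<Rightarrow> filling set" where
  "signed_tableaux lam mu k = {T. tableau_wrt rank_signed lam mu k T}"

definition double_weight :: "filling \<Rightarrow> (nat \<Rightarrow> nat) \<times> (nat \<Rightarrow> nat)" where
  "double_weight T = ((\<lambda>i. card {c. T c = Some (i, True)}),
                      (\<lambda>i. card {c. T c = Some (i, False)}))"

end

theory Submission
  imports Defs
begin

text \<open>Fix any total order of the letters \<open>i'\<close> and \<open>i\<close> and read a tableau in it as the chain of shapes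
  \<open>mu = S 0 \<subseteq> S 1 \<subseteq> \<dots> \<subseteq> S n = lam\<close> covered by the letters up to each position: a marked letter
  adds a vertical strip, an unmarked one a horizontal strip, and the double weight records the sizes of
  these strips.  The orders of \<open>X'_k\<close> and of the signed alphabet order the same letters, so they are
  connected by adjacent transpositions, and it suffices to swap two adjacent letters.  This only changes the
  middle shape \<open>m\<close> between two shapes \<open>A \<subseteq> B\<close> of the chain, and what is needed is a bijection between the
  possible middle shapes that exchanges \<open>|m/A|\<close> and \<open>|B/m|\<close>.  If one of the two strips is horizontal,
  the middle shapes form a box of integer vectors: for two horizontal strips the reflection of the box does
  it, and for a horizontal and a vertical strip both boxes have width at most one and equally many free
  coordinates, so complementation matches them.  Two vertical strips become horizontal ones after
  transposing the tableau, which conjugates the shape and exchanges marked and unmarked letters.\<close>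

section \<open>Strips, boxes and middle shapes\<close>

text \<open>Shapes are antitone row-length functions; \<open>strip True A B\<close> says that \<open>B/A\<close> is a vertical strip,
  \<open>strip False A B\<close> that it is a horizontal strip.\<close>

type_synonym shape = "nat \<Rightarrow> nat"

definition strip :: "bool \<Rightarrow> shape \<Rightarrow> shape \<Rightarrow> bool" where
  "strip vertical A B \<longleftrightarrow> (\<forall>i. A i \<le> B i) \<and>
     (if vertical then \<forall>i. B i \<le> Suc (A i) else \<forall>i. B (Suc i) \<le> A i)"

definition middle_shapes :: "bool \<Rightarrow> bool \<Rightarrow> shape \<Rightarrow> shape \<Rightarrow> shape set" where
  "middle_shapes v w A B = {m. antimono m \<and> strip v A m \<and> strip w m B}"

definition shape_size :: "nat \<Rightarrow> shape \<Rightarrow> nat" where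
  "shape_size N A = (\<Sum>i<N. A i)"

definition box :: "shape \<Rightarrow> shape \<Rightarrow> shape set" where
  "box lo hi = {m. \<forall>i. lo i \<le> m i \<and> m i \<le> hi i}"

lemma shape_size_mono: "(\<And>i. A i \<le> B i) \<Longrightarrow> shape_size N A \<le> shape_size N B"
  unfolding shape_size_def by (rule sum_mono)

lemma shape_size_diff:
  "(\<And>i. A i \<le> B i) \<Longrightarrow> (\<Sum>i<N. B i - A i) = shape_size N B - shape_size N A"
  unfolding shape_size_def by (simp add: sum_subtractf_nat)

lemma box_eq_empty: "hi i < lo i \<Longrightarrow> box lo hi = {}"
  unfolding box_def using le_trans not_le by blast

lemma box_reflection:
  assumes "m \<in> box lo hi"
  shows "(\<lambda>i. lo i + hi i - m i) \<in> box lo hi"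
    and "shape_size N (\<lambda>i. lo i + hi i - m i) + shape_size N m = shape_size N lo + shape_size N hi"
proof -
  have m: "lo i \<le> m i \<and> m i \<le> hi i" for i
    using assms unfolding box_def by blast
  have "lo i \<le> lo i + hi i - m i \<and> lo i + hi i - m i \<le> hi i" for i
    using m[of i] by arith
  then show "(\<lambda>i. lo i + hi i - m i) \<in> box lo hi"
    unfolding box_def by simp
  have "lo i + hi i - m i + m i = lo i + hi i" for i
    using m[of i] by simp
  then show "shape_size N (\<lambda>i. lo i + hi i - m i) + shape_size N m = shape_size N lo + shape_size N hi"
    unfolding shape_size_def sum.distrib[symmetric] by simp
qed

definition raise_on :: "shape \<Rightarrow> nat set \<Rightarrow> shape" where
  "raise_on lo X i = (if i \<in> X then Suc (lo i) else lo i)"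

lemma inj_raise_on: "inj (raise_on lo)"
proof (rule injI)
  fix X Y assume eq: "raise_on lo X = raise_on lo Y"
  have "i \<in> X \<longleftrightarrow> i \<in> Y" for i
    using fun_cong[OF eq, of i] unfolding raise_on_def by (auto split: if_splits)
  then show "X = Y"
    by blast
qed

lemma shape_size_raise_on:
  assumes "X \<subseteq> {..<N}"
  shows "shape_size N (raise_on lo X) = shape_size N lo + card X"
proof -
  have "shape_size N (raise_on lo X) = shape_size N lo + (\<Sum>i<N. if i \<in> X then 1 else 0)"
    unfolding shape_size_def raise_on_def sum.distrib[symmetric] by (rule sum.cong) auto
  also have "(\<Sum>i<N. if i \<in> X then 1 else 0) = card X"
    using assms by (simp add: sum.If_cases Int_absorb1)
  finally show ?thesis .
qed

lemma box_eq_raise_on_Pow: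
  assumes "\<And>i. lo i \<le> hi i" "\<And>i. hi i \<le> Suc (lo i)"
  shows "box lo hi = raise_on lo ` Pow {i. lo i < hi i}"
proof
  show "box lo hi \<subseteq> raise_on lo ` Pow {i. lo i < hi i}"
  proof
    fix m assume "m \<in> box lo hi"
    then have m: "lo i \<le> m i \<and> m i \<le> hi i" for i
      unfolding box_def by blast
    have "m = raise_on lo {i. lo i < m i}"
    proof
      fix i show "m i = raise_on lo {i. lo i < m i} i"
        using m[of i] assms[of i] unfolding raise_on_def by auto
    qed
    moreover have "{i. lo i < m i} \<subseteq> {i. lo i < hi i}"
      using m by (auto intro: less_le_trans)
    ultimately show "m \<in> raise_on lo ` Pow {i. lo i < hi i}"
      by blast
  qed
  show "raise_on lo ` Pow {i. lo i < hi i} \<subseteq> box lo hi"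
    using assms unfolding box_def raise_on_def by (auto simp: Suc_le_eq)
qed

lemma bij_betw_raise_on_Pow:
  assumes "\<And>i. lo i \<le> hi i" "\<And>i. hi i \<le> Suc (lo i)"
  shows "bij_betw (raise_on lo) (Pow {i. lo i < hi i}) (box lo hi)"
  unfolding bij_betw_def box_eq_raise_on_Pow[OF assms] using inj_raise_on by (blast intro: inj_on_subset)

lemma shape_size_zero_one_box:
  assumes "\<And>i. lo i \<le> hi i" "\<And>i. hi i \<le> Suc (lo i)" "\<And>i. N \<le> i \<Longrightarrow> hi i = 0"
  shows "{i. lo i < hi i} \<subseteq> {..<N}" and "shape_size N hi = shape_size N lo + card {i. lo i < hi i}"
proof -
  show free: "{i. lo i < hi i} \<subseteq> {..<N}"
    using assms(3) by (auto simp flip: not_le)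
  have "hi i = raise_on lo {i. lo i < hi i} i" for i
    using assms(1,2)[of i] unfolding raise_on_def by auto
  then have hi: "hi = raise_on lo {i. lo i < hi i}"
    by blast
  from shape_size_raise_on[OF free, of lo]
  show "shape_size N hi = shape_size N lo + card {i. lo i < hi i}"
    unfolding hi[symmetric] .
qed

text \<open>A box of width at most one is the power set of its free coordinates in disguise;
  matching the free coordinates of two such boxes and complementing gives the bijection.\<close>

lemma zero_one_boxes_bij:
  assumes lo_hi: "\<And>i. lo i \<le> hi i" "\<And>i. hi i \<le> Suc (lo i)" "\<And>i. N \<le> i \<Longrightarrow> hi i = 0"
    and lo_hi': "\<And>i. lo' i \<le> hi' i" "\<And>i. hi' i \<le> Suc (lo' i)" "\<And>i. N \<le> i \<Longrightarrow> hi' i = 0"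
    and sizes: "shape_size N lo + shape_size N hi' = shape_size N hi + shape_size N lo'"
  shows "\<exists>g. bij_betw g (box lo hi) (box lo' hi') \<and>
    (\<forall>m\<in>box lo hi. shape_size N (g m) + shape_size N m = shape_size N lo + shape_size N hi')"
proof -
  define F F' where "F = {i. lo i < hi i}" and "F' = {i. lo' i < hi' i}"
  note F = shape_size_zero_one_box[of lo hi N, OF lo_hi, folded F_def]
    and F' = shape_size_zero_one_box[of lo' hi' N, OF lo_hi', folded F'_def]
  then have fin: "finite F" "finite F'"
    by (auto intro: finite_subset)
  moreover have "card F = card F'"
    using F(2) F'(2) sizes by simp
  ultimately obtain h where h: "bij_betw h F F'"
    using finite_same_card_bij by blast
  note box = bij_betw_raise_on_Pow[of lo hi, OF lo_hi(1,2), folded F_def]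
    bij_betw_raise_on_Pow[of lo' hi', OF lo_hi'(1,2), folded F'_def]
  have "bij_betw (\<lambda>X. F' - X) (Pow F') (Pow F')"
    by (rule bij_betw_byWitness[where f'="\<lambda>X. F' - X"]) auto
  then have "bij_betw (raise_on lo' \<circ> ((\<lambda>X. F' - X) \<circ> (image h \<circ> inv_into (Pow F) (raise_on lo))))
      (box lo hi) (box lo' hi')"
    using bij_betw_inv_into[OF box(1)] bij_betw_Pow[OF h] box(2) by (blast intro: bij_betw_trans)
  moreover have "shape_size N (raise_on lo' (F' - h ` X)) + shape_size N (raise_on lo X)
      = shape_size N lo + shape_size N hi'" if "X \<subseteq> F" for X
  proof -
    have hX: "h ` X \<subseteq> F'" "card (h ` X) = card X"
      using that h unfolding bij_betw_def by (auto intro: card_image inj_on_subset)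
    then have "card (F' - h ` X) + card X = card F'"
      using card_Diff_subset[of "h ` X" F'] card_mono[OF fin(2) hX(1)] finite_subset[OF _ fin(2)] by simp
    moreover have "X \<subseteq> {..<N}" "F' - h ` X \<subseteq> {..<N}"
      using that F(1) F'(1) by auto
    ultimately show ?thesis
      using F'(2) shape_size_raise_on[of X N lo] shape_size_raise_on[of "F' - h ` X" N lo'] by simp
  qed
  moreover have "inv_into (Pow F) (raise_on lo) (raise_on lo X) = X" if "X \<subseteq> F" for X
    using that box(1) unfolding bij_betw_def by (simp add: inv_into_f_f)
  moreover have "\<exists>X\<subseteq>F. m = raise_on lo X" if "m \<in> box lo hi" for m
    using that box(1) unfolding bij_betw_def by auto
  ultimately show ?thesis
    by (intro exI[of _ "raise_on lo' \<circ> ((\<lambda>X. F' - X) \<circ> (image h \<circ> inv_into (Pow F) (raise_on lo)))"])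
      (metis comp_apply)
qed

text \<open>For a middle shape \<open>m\<close> between \<open>A\<close> and \<open>B\<close>, \<open>hupper\<close> and \<open>vupper\<close> are the upper bounds
  forced by \<open>m/A\<close> being a horizontal resp. vertical strip, \<open>hlower\<close> and \<open>vlower\<close> the lower bounds
  forced by \<open>B/m\<close> being one.\<close>

definition hupper :: "shape \<Rightarrow> shape \<Rightarrow> shape" where
  "hupper A B i = (case i of 0 \<Rightarrow> B 0 | Suc j \<Rightarrow> min (A j) (B i))"

definition vupper :: "shape \<Rightarrow> shape \<Rightarrow> shape" where
  "vupper A B i = min (Suc (A i)) (B i)"

definition hlower :: "shape \<Rightarrow> shape \<Rightarrow> shape" where
  "hlower A B i = max (A i) (B (Suc i))"

definition vlower :: "shape \<Rightarrow> shape \<Rightarrow> shape" where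
  "vlower A B i = max (A i) (B i - 1)"

lemma middle_shapes_hv: "middle_shapes False True A B = box (vlower A B) (hupper A B)"
proof (intro set_eqI iffI)
  fix m assume "m \<in> middle_shapes False True A B"
  then have "A i \<le> m i" "m (Suc i) \<le> A i" "m i \<le> B i" "B i - 1 \<le> m i" for i
    unfolding middle_shapes_def strip_def by (auto simp: le_diff_conv)
  then show "m \<in> box (vlower A B) (hupper A B)"
    unfolding box_def vlower_def hupper_def by (auto split: nat.split)
next
  fix m assume "m \<in> box (vlower A B) (hupper A B)"
  then have b: "vlower A B i \<le> m i \<and> m i \<le> hupper A B i" for i
    unfolding box_def by blast
  have "A i \<le> m i" "m (Suc i) \<le> A i" "m i \<le> B i" "B i \<le> Suc (m i)" for i
    using b[of i] b[of "Suc i"] by (cases i; auto simp: vlower_def hupper_def)+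
  then show "m \<in> middle_shapes False True A B"
    unfolding middle_shapes_def antimono_iff_le_Suc strip_def by (auto intro: le_trans)
qed

lemma middle_shapes_vh: "middle_shapes True False A B = box (hlower A B) (vupper A B)"
proof (intro set_eqI iffI)
  fix m assume "m \<in> middle_shapes True False A B"
  then show "m \<in> box (hlower A B) (vupper A B)"
    unfolding middle_shapes_def strip_def box_def hlower_def vupper_def by auto
next
  fix m assume "m \<in> box (hlower A B) (vupper A B)"
  then have "A i \<le> m i" "m i \<le> Suc (A i)" "m i \<le> B i" "B (Suc i) \<le> m i" for i
    unfolding box_def hlower_def vupper_def by auto
  moreover have "m (Suc i) \<le> m i" for i
    using calculation(3)[of "Suc i"] calculation(4)[of i] by simp
  ultimately show "m \<in> middle_shapes True False A B"
    unfolding middle_shapes_def antimono_iff_le_Suc strip_def by auto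
qed

lemma middle_shapes_hh: "middle_shapes False False A B = box (hlower A B) (hupper A B)"
proof (intro set_eqI iffI)
  fix m assume "m \<in> middle_shapes False False A B"
  then have "A i \<le> m i" "m (Suc i) \<le> A i" "m i \<le> B i" "B (Suc i) \<le> m i" for i
    unfolding middle_shapes_def strip_def by auto
  then show "m \<in> box (hlower A B) (hupper A B)"
    unfolding box_def hlower_def hupper_def by (auto split: nat.split)
next
  fix m assume "m \<in> box (hlower A B) (hupper A B)"
  then have b: "hlower A B i \<le> m i \<and> m i \<le> hupper A B i" for i
    unfolding box_def by blast
  have "A i \<le> m i" "m (Suc i) \<le> A i" "m i \<le> B i" "B (Suc i) \<le> m i" for i
    using b[of i] b[of "Suc i"] by (cases i; auto simp: hlower_def hupper_def)+
  then show "m \<in> middle_shapes False False A B"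
    unfolding middle_shapes_def antimono_iff_le_Suc strip_def by (auto intro: le_trans)
qed

lemma shape_size_hlower_hupper:
  assumes "\<And>i. N \<le> i \<Longrightarrow> B i = 0"
  shows "shape_size N (hlower A B) + shape_size N (hupper A B) = shape_size N A + shape_size N B"
proof -
  \<comment> \<open>\<open>hlower A B i + hupper A B (Suc i) = A i + B (Suc i)\<close>, so the sums telescope\<close>
  have tele: "(\<Sum>i<n. hlower A B i + hupper A B i) + hupper A B n = (\<Sum>i<n. A i) + (\<Sum>i<Suc n. B i)" for n
    by (induction n) (auto simp: hlower_def hupper_def)
  have "hupper A B N = 0"
    using assms by (cases N) (auto simp: hupper_def)
  then have "(\<Sum>i<N. hlower A B i + hupper A B i) = (\<Sum>i<N. A i) + (\<Sum>i<N. B i)"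
    using tele[of N] assms[of N] by simp
  then show ?thesis
    unfolding shape_size_def by (simp add: sum.distrib)
qed

lemma shape_size_vlower_vupper:
  assumes "\<And>i. A i \<le> B i"
  shows "shape_size N (vlower A B) + shape_size N (vupper A B) = shape_size N A + shape_size N B"
proof -
  have "vlower A B i + vupper A B i = A i + B i" for i
    using assms[of i] unfolding vlower_def vupper_def by auto
  then show ?thesis
    unfolding shape_size_def sum.distrib[symmetric] by simp
qed

lemma size_complement_inv_into:
  assumes "bij_betw g X Y" and "\<forall>m\<in>X. shape_size N (g m) + shape_size N m = s"
  shows "\<forall>m\<in>Y. shape_size N (inv_into X g m) + shape_size N m = s"
proof
  fix m assume "m \<in> Y"
  then obtain x where "x \<in> X" "m = g x"
    using assms(1) unfolding bij_betw_def by blast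
  then show "shape_size N (inv_into X g m) + shape_size N m = s"
    using assms bij_betw_imp_inj_on[OF assms(1)] by (simp add: inv_into_f_f add.commute)
qed

context
  fixes A B :: shape and N :: nat
  assumes antimono: "antimono A" "antimono B" and A_le_B: "\<And>i. A i \<le> B i"
    and bounded: "\<And>i. N \<le> i \<Longrightarrow> B i = 0"
begin

lemma middle_shapes_hh_bij:
  "\<exists>g. bij_betw g (middle_shapes False False A B) (middle_shapes False False A B) \<and>
    (\<forall>m\<in>middle_shapes False False A B. shape_size N (g m) + shape_size N m = shape_size N A + shape_size N B)"
proof -
  define g where "g m = (\<lambda>i. hlower A B i + hupper A B i - m i)" for m :: shape
  have "g (g m) = m" if "m \<in> box (hlower A B) (hupper A B)" for m
  proof
    fix i
    have "hlower A B i \<le> m i \<and> m i \<le> hupper A B i"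
      using that unfolding box_def by blast
    then show "g (g m) i = m i"
      unfolding g_def by simp
  qed
  moreover have "g m \<in> box (hlower A B) (hupper A B)" if "m \<in> box (hlower A B) (hupper A B)" for m
    using box_reflection(1)[OF that] unfolding g_def .
  ultimately have "bij_betw g (box (hlower A B) (hupper A B)) (box (hlower A B) (hupper A B))"
    by (intro bij_betw_byWitness[where f'=g]) auto
  then show ?thesis
    using box_reflection(2) shape_size_hlower_hupper[of N B A, OF bounded]
    unfolding middle_shapes_hh g_def by auto
qed

lemma middle_shapes_hv_bij:
  "\<exists>g. bij_betw g (middle_shapes False True A B) (middle_shapes True False A B) \<and>
    (\<forall>m\<in>middle_shapes False True A B. shape_size N (g m) + shape_size N m = shape_size N A + shape_size N B)"
proof (cases "\<exists>j. Suc (A j) < B (Suc j)")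
  case True
  then obtain j where j: "Suc (A j) < B (Suc j)"
    by blast
  then have "hupper A B (Suc j) < vlower A B (Suc j)" "vupper A B j < hlower A B j"
    unfolding hupper_def vlower_def vupper_def hlower_def by auto
  then have "box (vlower A B) (hupper A B) = {}" "box (hlower A B) (vupper A B) = {}"
    by (simp_all add: box_eq_empty)
  then show ?thesis
    unfolding middle_shapes_hv middle_shapes_vh by auto
next
  case False
  then have no_gap: "B (Suc j) \<le> Suc (A j)" for j
    by (simp add: not_less)
  have "vlower A B i \<le> hupper A B i" for i
    using A_le_B no_gap antimono(1) unfolding vlower_def hupper_def antimono_iff_le_Suc
    by (cases i) (auto simp: le_diff_conv)
  moreover have "hlower A B i \<le> vupper A B i" for i
    using A_le_B no_gap antimono(2) unfolding hlower_def vupper_def antimono_iff_le_Suc by auto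
  moreover have "hupper A B i \<le> Suc (vlower A B i)" "vupper A B i \<le> Suc (hlower A B i)" for i
    unfolding vlower_def hupper_def hlower_def vupper_def by (cases i; auto)+
  moreover have "hupper A B i = 0" "vupper A B i = 0" if "N \<le> i" for i
    using bounded that unfolding hupper_def vupper_def by (cases i; auto)+
  moreover have "shape_size N (vlower A B) + shape_size N (vupper A B)
      = shape_size N (hupper A B) + shape_size N (hlower A B)"
    using shape_size_hlower_hupper[of N B A, OF bounded] shape_size_vlower_vupper[of A B N, OF A_le_B] by simp
  ultimately show ?thesis
    using zero_one_boxes_bij[where lo="vlower A B" and hi="hupper A B" and lo'="hlower A B" and hi'="vupper A B" and N=N]
      shape_size_vlower_vupper[of A B N, OF A_le_B]
    unfolding middle_shapes_hv middle_shapes_vh by auto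
qed

lemma middle_shapes_swap:
  assumes "\<not> (v \<and> w)"
  shows "\<exists>g. bij_betw g (middle_shapes v w A B) (middle_shapes w v A B) \<and>
    (\<forall>m\<in>middle_shapes v w A B. shape_size N (g m) + shape_size N m = shape_size N A + shape_size N B)"
proof -
  consider "\<not> v" "\<not> w" | "\<not> v" "w" | "v" "\<not> w"
    using assms by blast
  then show ?thesis
  proof cases
    case 1
    then show ?thesis
      using middle_shapes_hh_bij by simp
  next
    case 2
    then show ?thesis
      using middle_shapes_hv_bij by simp
  next
    case 3
    obtain g where g: "bij_betw g (middle_shapes False True A B) (middle_shapes True False A B)"
      "\<forall>m\<in>middle_shapes False True A B. shape_size N (g m) + shape_size N m = shape_size N A + shape_size N B"
      using middle_shapes_hv_bij by blast
    show ?thesis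
      using 3 bij_betw_inv_into[OF g(1)] size_complement_inv_into[OF g] by auto
  qed
qed

end

lemma middle_shapes_swap_fun:
  assumes "\<not> (v \<and> w)"
  obtains G where "\<And>A B. antimono A \<Longrightarrow> antimono B \<Longrightarrow> (\<And>i. A i \<le> B i) \<Longrightarrow> (\<And>i. N \<le> i \<Longrightarrow> B i = 0) \<Longrightarrow>
      bij_betw (G A B) (middle_shapes v w A B) (middle_shapes w v A B) \<and>
      (\<forall>m\<in>middle_shapes v w A B. shape_size N (G A B m) + shape_size N m = shape_size N A + shape_size N B)"
proof -
  define P where "P A B g \<longleftrightarrow> bij_betw g (middle_shapes v w A B) (middle_shapes w v A B) \<and>
      (\<forall>m\<in>middle_shapes v w A B. shape_size N (g m) + shape_size N m = shape_size N A + shape_size N B)"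
    for A B g
  have "P A B (SOME g. P A B g)"
    if "antimono A" "antimono B" "\<And>i. A i \<le> B i" "\<And>i. N \<le> i \<Longrightarrow> B i = 0" for A B
  proof -
    have "\<exists>g. P A B g"
      unfolding P_def by (rule middle_shapes_swap[where A=A and B=B and N=N, OF that assms])
    then show ?thesis
      by (rule someI_ex)
  qed
  then show ?thesis
    using that[of "\<lambda>A B. SOME g. P A B g"] unfolding P_def by blast
qed

section \<open>Tableaux as chains of shapes\<close>

definition pos :: "letter list \<Rightarrow> letter \<Rightarrow> nat" where
  "pos L a = (LEAST t. t < length L \<and> L ! t = a)"

lemma pos_nth: "distinct L \<Longrightarrow> t < length L \<Longrightarrow> pos L (L ! t) = t"
  unfolding pos_def by (rule Least_equality) (auto simp: nth_eq_iff_index_eq)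

lemma pos_less_length_and_nth:
  assumes "a \<in> set L"
  shows "pos L a < length L \<and> L ! pos L a = a"
proof -
  have "\<exists>t. t < length L \<and> L ! t = a"
    using assms by (simp add: in_set_conv_nth)
  then show ?thesis
    unfolding pos_def by (rule LeastI_ex)
qed

definition tableau_on :: "(letter \<Rightarrow> int) \<Rightarrow> (letter \<Rightarrow> bool) \<Rightarrow> (nat \<times> nat) set \<Rightarrow> filling \<Rightarrow> bool" where
  "tableau_on rk P C T \<longleftrightarrow>
     (\<forall>c. (T c \<noteq> None) \<longleftrightarrow> c \<in> C) \<and>
     (\<forall>c a. T c = Some a \<longrightarrow> P a) \<and>
     (\<forall>i j j' a b. T (i, j) = Some a \<and> T (i, j') = Some b \<and> j \<le> j' \<longrightarrow> rk a \<le> rk b) \<and>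
     (\<forall>i i' j a b. T (i, j) = Some a \<and> T (i', j) = Some b \<and> i \<le> i' \<longrightarrow> rk a \<le> rk b) \<and>
     (\<forall>r v. card {j. T (r, j) = Some (v, True)} \<le> 1) \<and>
     (\<forall>col v. card {i. T (i, col) = Some (v, False)} \<le> 1)"

lemma tableau_wrt_eq_tableau_on: "tableau_wrt rk lam mu k T = tableau_on rk (in_alphabet k) (cells lam mu) T"
  unfolding tableau_wrt_def tableau_on_def by simp

definition list_tableaux :: "letter list \<Rightarrow> (nat \<times> nat) set \<Rightarrow> filling set" where
  "list_tableaux L C = {T. tableau_on (\<lambda>a. int (pos L a)) (\<lambda>a. a \<in> set L) C T}"

definition letter_count :: "filling \<Rightarrow> letter \<Rightarrow> nat" where
  "letter_count T a = card {c. T c = Some a}"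

definition skew_cells :: "shape \<Rightarrow> shape \<Rightarrow> (nat \<times> nat) set" where
  "skew_cells la mu = {(i, j). mu i \<le> j \<and> j < la i}"

text \<open>A tableau whose letters are ordered by the list \<open>L\<close> is the same as a chain of shapes
  \<open>mu = S 0 \<subseteq> S 1 \<subseteq> \<dots> \<subseteq> S (length L) = la\<close> in which \<open>S (t + 1) / S t\<close>, the cells filled
  with \<open>L ! t\<close>, is a vertical strip for a marked and a horizontal strip for an unmarked letter.\<close>

definition shape_chain :: "letter list \<Rightarrow> shape \<Rightarrow> shape \<Rightarrow> (nat \<Rightarrow> shape) \<Rightarrow> bool" where
  "shape_chain L mu la S \<longleftrightarrow> S 0 = mu \<and> (\<forall>t\<ge>length L. S t = la) \<and> (\<forall>t. antimono (S t)) \<and>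
     (\<forall>t<length L. strip (snd (L ! t)) (S t) (S (Suc t)))"

definition chain_filling :: "letter list \<Rightarrow> (nat \<Rightarrow> shape) \<Rightarrow> filling" where
  "chain_filling L S = (\<lambda>(i, j). if S 0 i \<le> j \<and> j < S (length L) i
     then Some (L ! (LEAST t. j < S (Suc t) i)) else None)"

text \<open>Row \<open>i\<close> of the shape \<open>filling_chain L mu la T t\<close> ends where the entries of positions \<open>\<ge> t\<close>
  in \<open>L\<close> begin.\<close>

definition filling_chain :: "letter list \<Rightarrow> shape \<Rightarrow> shape \<Rightarrow> filling \<Rightarrow> nat \<Rightarrow> shape" where
  "filling_chain L mu la T t i = (LEAST j. mu i \<le> j \<and> (la i \<le> j \<or> t \<le> pos L (the (T (i, j)))))"

lemma card_le_1I:
  assumes "\<And>x y. x \<in> A \<Longrightarrow> y \<in> A \<Longrightarrow> x = y"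
  shows "card A \<le> 1"
proof (cases "A = {}")
  case False
  then obtain x where "A = {x}"
    using assms by blast
  then show ?thesis
    by simp
qed simp

locale skew_diagram =
  fixes la mu :: shape and N :: nat
  assumes antimono_la: "antimono la" and antimono_mu: "antimono mu"
    and mu_le_la: "\<And>i. mu i \<le> la i" and la_vanishes: "\<And>i. N \<le> i \<Longrightarrow> la i = 0"
begin

lemma mu_vanishes: "N \<le> i \<Longrightarrow> mu i = 0"
  using mu_le_la[of i] la_vanishes[of i] by simp

lemma finite_skew_cells: "finite (skew_cells la mu)"
proof (rule finite_subset)
  show "skew_cells la mu \<subseteq> {..<N} \<times> {..<la 0}"
  proof
    fix c assume "c \<in> skew_cells la mu"
    then obtain i j where c: "c = (i, j)" "j < la i"
      unfolding skew_cells_def by auto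
    moreover have "la i \<le> la 0"
      using antimonoD[OF antimono_la] by simp
    moreover have "i < N"
      using la_vanishes[of i] c by (cases "N \<le> i") auto
    ultimately show "c \<in> {..<N} \<times> {..<la 0}"
      by auto
  qed
qed simp

end

locale ordered_skew_diagram = skew_diagram +
  fixes L :: "letter list"
  assumes distinct_L: "distinct L"
begin

abbreviation "n \<equiv> length L"

context
  fixes S assumes chain: "shape_chain L mu la S"
begin

lemma chain_start: "S 0 = mu"
  and chain_end: "n \<le> t \<Longrightarrow> S t = la"
  and chain_antimono: "antimono (S t)"
  and chain_strip: "t < n \<Longrightarrow> strip (snd (L ! t)) (S t) (S (Suc t))"
  using chain unfolding shape_chain_def by auto

lemma chain_mono: "t \<le> t' \<Longrightarrow> S t i \<le> S t' i"
proof (rule lift_Suc_mono_le[of "\<lambda>t. S t i"])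
  fix t show "S t i \<le> S (Suc t) i"
    using chain_strip[of t] chain_end[of t] chain_end[of "Suc t"] unfolding strip_def
    by (cases "t < n") auto
qed

lemma chain_le_la: "S t i \<le> la i"
  using chain_mono[of t "max t n" i] chain_end[of "max t n"] by simp

lemma chain_ge_mu: "mu i \<le> S t i"
  using chain_mono[of 0 t i] chain_start by simp

lemma chain_vanishes: "N \<le> i \<Longrightarrow> S t i = 0"
  using chain_le_la[of t i] la_vanishes[of i] by simp

lemma chain_slot_unique:
  assumes "S t i \<le> j" "j < S (Suc t) i" "S t' i \<le> j" "j < S (Suc t') i"
  shows "t = t'"
  using chain_mono[of "Suc t" t' i] chain_mono[of "Suc t'" t i] assms
  by (cases t t' rule: linorder_cases) auto

lemma chain_slot_exists:
  assumes "S 0 i \<le> j" "j < S n i"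
  shows "\<exists>t<n. S t i \<le> j \<and> j < S (Suc t) i \<and> chain_filling L S (i, j) = Some (L ! t)"
proof -
  obtain n' where n': "n = Suc n'"
    using assms by (cases n) auto
  define t0 where "t0 = (LEAST t. j < S (Suc t) i)"
  have "j < S (Suc t0) i"
    unfolding t0_def by (rule LeastI[of _ n']) (use assms n' in simp)
  moreover have "t0 \<le> n'"
    unfolding t0_def by (rule Least_le) (use assms n' in simp)
  moreover have "S t0 i \<le> j"
  proof (cases t0)
    case (Suc t1)
    then have "\<not> j < S (Suc t1) i"
      unfolding t0_def by (metis lessI not_less_Least)
    then show ?thesis
      using Suc by simp
  qed (use assms in simp)
  moreover have "chain_filling L S (i, j) = Some (L ! t0)"
    unfolding chain_filling_def t0_def using assms by simp
  ultimately show ?thesis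
    using n' by (intro exI[of _ t0]) auto
qed

lemma chain_filling_SomeD:
  assumes "chain_filling L S (i, j) = Some a"
  shows "\<exists>t<n. a = L ! t \<and> S t i \<le> j \<and> j < S (Suc t) i"
proof -
  have "S 0 i \<le> j \<and> j < S n i"
    using assms unfolding chain_filling_def by (auto split: if_splits)
  then show ?thesis
    using chain_slot_exists assms by fastforce
qed

lemma chain_filling_eq_Some_iff:
  assumes "t < n"
  shows "chain_filling L S (i, j) = Some (L ! t) \<longleftrightarrow> S t i \<le> j \<and> j < S (Suc t) i"
proof
  assume "chain_filling L S (i, j) = Some (L ! t)"
  then obtain t' where "t' < n" "L ! t = L ! t'" "S t' i \<le> j" "j < S (Suc t') i"
    using chain_filling_SomeD by blast
  then show "S t i \<le> j \<and> j < S (Suc t) i"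
    using distinct_L assms by (simp add: nth_eq_iff_index_eq)
next
  assume slot: "S t i \<le> j \<and> j < S (Suc t) i"
  then have "S 0 i \<le> j" "j < S n i"
    using chain_mono[of 0 t i] chain_mono[of "Suc t" n i] assms by auto
  then obtain t' where "S t' i \<le> j" "j < S (Suc t') i" "chain_filling L S (i, j) = Some (L ! t')"
    using chain_slot_exists by blast
  then show "chain_filling L S (i, j) = Some (L ! t)"
    using chain_slot_unique slot by blast
qed

lemma chain_filling_defined: "chain_filling L S (i, j) \<noteq> None \<longleftrightarrow> (i, j) \<in> skew_cells la mu"
  unfolding chain_filling_def skew_cells_def using chain_start chain_end[of n] by auto

lemma chain_filling_row_mono:
  assumes "chain_filling L S (i, j) = Some a" "chain_filling L S (i', j') = Some b"
    and "i \<le> i'" "j \<le> j'"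
  shows "pos L a \<le> pos L b"
proof -
  obtain t where t: "t < n" "a = L ! t" "S t i \<le> j" "j < S (Suc t) i"
    using chain_filling_SomeD assms(1) by blast
  obtain t' where t': "t' < n" "b = L ! t'" "S t' i' \<le> j'" "j' < S (Suc t') i'"
    using chain_filling_SomeD assms(2) by blast
  have "t \<le> t'"
  proof (rule ccontr)
    assume "\<not> t \<le> t'"
    then have "S (Suc t') i' \<le> S t i"
      using order_trans[OF chain_mono[of "Suc t'" t i'] antimonoD[OF chain_antimono assms(3)]] by simp
    then show False
      using t t' assms(4) by simp
  qed
  then show ?thesis
    using t t' pos_nth[OF distinct_L] by simp
qed

lemma chain_filling_marked_in_row: "card {j. chain_filling L S (r, j) = Some (v, True)} \<le> 1"
proof (rule card_le_1I)
  fix x y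
  assume "x \<in> {j. chain_filling L S (r, j) = Some (v, True)}" "y \<in> {j. chain_filling L S (r, j) = Some (v, True)}"
  then have "chain_filling L S (r, x) = Some (v, True)" "chain_filling L S (r, y) = Some (v, True)"
    by simp_all
  then obtain t t' where t: "t < n" "(v, True) = L ! t" "S t r \<le> x" "x < S (Suc t) r"
    and t': "t' < n" "(v, True) = L ! t'" "S t' r \<le> y" "y < S (Suc t') r"
    by (elim chain_filling_SomeD[elim_format] exE conjE) auto
  have "t = t'"
    using t t' distinct_L by (simp add: nth_eq_iff_index_eq)
  moreover have "S (Suc t) r \<le> Suc (S t r)"
    using chain_strip[OF t(1)] t(2)[symmetric] unfolding strip_def by simp
  ultimately show "x = y"
    using t t' by simp
qed

lemma chain_filling_unmarked_in_column: "card {i. chain_filling L S (i, col) = Some (v, False)} \<le> 1"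
proof -
  have no_two: False if xy: "x < y" "chain_filling L S (x, col) = Some (v, False)"
    "chain_filling L S (y, col) = Some (v, False)" for x y
  proof -
    obtain t where t: "t < n" "(v, False) = L ! t" "S t x \<le> col"
      using chain_filling_SomeD[OF xy(2)] by blast
    obtain t' where t': "t' < n" "(v, False) = L ! t'" "col < S (Suc t') y"
      using chain_filling_SomeD[OF xy(3)] by blast
    have "t = t'"
      using t t' distinct_L by (simp add: nth_eq_iff_index_eq)
    moreover have "S (Suc t) (Suc x) \<le> S t x"
      using chain_strip[OF t(1)] t(2)[symmetric] unfolding strip_def by simp
    moreover have "S (Suc t) y \<le> S (Suc t) (Suc x)"
      using antimonoD[OF chain_antimono] xy(1) by simp
    ultimately show False
      using t t' by simp
  qed
  show ?thesis
  proof (rule card_le_1I)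
    fix x y
    assume "x \<in> {i. chain_filling L S (i, col) = Some (v, False)}" "y \<in> {i. chain_filling L S (i, col) = Some (v, False)}"
    then show "x = y"
      using no_two[of x y] no_two[of y x] by (cases x y rule: linorder_cases) auto
  qed
qed

lemma chain_filling_in_list_tableaux: "chain_filling L S \<in> list_tableaux L (skew_cells la mu)"
  unfolding list_tableaux_def tableau_on_def mem_Collect_eq
proof (intro conjI allI impI)
  fix c show "chain_filling L S c \<noteq> None \<longleftrightarrow> c \<in> skew_cells la mu"
    using chain_filling_defined by (cases c) auto
next
  fix c a assume "chain_filling L S c = Some a"
  moreover obtain i j where "c = (i, j)"
    by fastforce
  ultimately show "a \<in> set L"
    using chain_filling_SomeD[of i j a] by auto
qed (use chain_filling_row_mono chain_filling_marked_in_row chain_filling_unmarked_in_column in auto)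

lemma letter_count_chain_filling:
  assumes "t < n"
  shows "letter_count (chain_filling L S) (L ! t) = shape_size N (S (Suc t)) - shape_size N (S t)"
proof -
  have "chain_filling L S (i, j) = Some (L ! t) \<longleftrightarrow> (i, j) \<in> Sigma {..<N} (\<lambda>i. {S t i..<S (Suc t) i})" for i j
    using chain_filling_eq_Some_iff[OF assms, of i j] chain_vanishes[of i "Suc t"] by (cases "N \<le> i") auto
  then have "{c. chain_filling L S c = Some (L ! t)} = Sigma {..<N} (\<lambda>i. {S t i..<S (Suc t) i})"
    by (simp add: set_eq_iff split_paired_All)
  moreover have "S t i \<le> S (Suc t) i" for i
    by (rule chain_mono) simp
  ultimately show ?thesis
    unfolding letter_count_def by (simp add: card_SigmaI shape_size_diff)
qed

lemma letter_count_chain_filling_notin: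
  assumes "a \<notin> set L"
  shows "letter_count (chain_filling L S) a = 0"
proof -
  have "{c. chain_filling L S c = Some a} = {}"
    using assms chain_filling_SomeD by fastforce
  then show ?thesis
    unfolding letter_count_def by (metis card.empty)
qed

lemma filling_chain_chain_filling: "filling_chain L mu la (chain_filling L S) = S"
proof (intro ext)
  fix t i
  show "filling_chain L mu la (chain_filling L S) t i = S t i"
    unfolding filling_chain_def
  proof (rule Least_equality)
    show "mu i \<le> S t i \<and> (la i \<le> S t i \<or> t \<le> pos L (the (chain_filling L S (i, S t i))))"
    proof (cases "la i \<le> S t i")
      case False
      then obtain t' where t': "t' < n" "S t i < S (Suc t') i" "chain_filling L S (i, S t i) = Some (L ! t')"
        using chain_slot_exists[of i "S t i"] chain_mono[of 0 t i] chain_end[of n] by auto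
      have "t \<le> t'"
        using t'(2) chain_mono[of "Suc t'" t i] by (cases "t \<le> t'") auto
      then show ?thesis
        using t' pos_nth[OF distinct_L] chain_ge_mu by simp
    qed (use chain_ge_mu in auto)
  next
    fix y assume y: "mu i \<le> y \<and> (la i \<le> y \<or> t \<le> pos L (the (chain_filling L S (i, y))))"
    show "S t i \<le> y"
    proof (rule ccontr)
      assume "\<not> S t i \<le> y"
      then have y_less: "y < S t i"
        by simp
      then have "\<not> la i \<le> y"
        using chain_le_la[of t i] by simp
      moreover obtain t' where t': "t' < n" "S t' i \<le> y" "chain_filling L S (i, y) = Some (L ! t')"
        using chain_slot_exists[of i y] y y_less chain_start chain_le_la[of t i] chain_end[of n] by auto
      moreover have "t' < t"
        using t'(2) y_less chain_mono[of t t' i] by (cases "t' < t") auto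
      ultimately show False
        using y pos_nth[OF distinct_L] by simp
    qed
  qed
qed

end


context
  fixes T assumes tableau: "T \<in> list_tableaux L (skew_cells la mu)"
begin

abbreviation "entry_pos i j \<equiv> pos L (the (T (i, j)))"

abbreviation "R \<equiv> filling_chain L mu la T"

lemma tableau_on_T: "tableau_on (\<lambda>a. int (pos L a)) (\<lambda>a. a \<in> set L) (skew_cells la mu) T"
  using tableau unfolding list_tableaux_def by simp

lemma tableau_marked_in_row: "card {j. T (r, j) = Some (v, True)} \<le> 1"
  and tableau_unmarked_in_column: "card {i. T (i, col) = Some (v, False)} \<le> 1"
  using tableau_on_T unfolding tableau_on_def by blast+

lemma finite_row_entries: "finite {j. T (r, j) = Some a}"
proof (rule finite_subset[OF _ finite_imageI[OF finite_skew_cells]])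
  show "{j. T (r, j) = Some a} \<subseteq> snd ` skew_cells la mu"
  proof
    fix j assume "j \<in> {j. T (r, j) = Some a}"
    then have "(r, j) \<in> skew_cells la mu"
      using tableau_on_T unfolding tableau_on_def by blast
    then show "j \<in> snd ` skew_cells la mu"
      by (rule image_eqI[rotated]) simp
  qed
qed

lemma finite_column_entries: "finite {i. T (i, col) = Some a}"
proof (rule finite_subset[OF _ finite_imageI[OF finite_skew_cells]])
  show "{i. T (i, col) = Some a} \<subseteq> fst ` skew_cells la mu"
  proof
    fix i assume "i \<in> {i. T (i, col) = Some a}"
    then have "(i, col) \<in> skew_cells la mu"
      using tableau_on_T unfolding tableau_on_def by blast
    then show "i \<in> fst ` skew_cells la mu"
      by (rule image_eqI[rotated]) simp
  qed
qed

lemma tableau_entry: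
  assumes "(i, j) \<in> skew_cells la mu"
  shows "T (i, j) = Some (L ! entry_pos i j) \<and> entry_pos i j < n"
proof -
  obtain a where a: "T (i, j) = Some a"
    using tableau_on_T assms unfolding tableau_on_def by blast
  then have "a \<in> set L"
    using tableau_on_T unfolding tableau_on_def by blast
  then show ?thesis
    using a pos_less_length_and_nth by simp
qed

lemma entry_pos_mono:
  assumes "(i, j) \<in> skew_cells la mu" "(i', j') \<in> skew_cells la mu"
    and "i = i' \<and> j \<le> j' \<or> i \<le> i' \<and> j = j'"
  shows "entry_pos i j \<le> entry_pos i' j'"
proof -
  have "int (pos L (L ! entry_pos i j)) \<le> int (pos L (L ! entry_pos i' j'))"
    using tableau_on_T tableau_entry[OF assms(1)] tableau_entry[OF assms(2)] assms(3)
    unfolding tableau_on_def by blast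
  then show ?thesis
    using pos_nth[OF distinct_L] tableau_entry[OF assms(1)] tableau_entry[OF assms(2)] by simp
qed

lemma filling_chain_spec: "mu i \<le> R t i \<and> (la i \<le> R t i \<or> t \<le> entry_pos i (R t i))"
  and filling_chain_le_la: "R t i \<le> la i"
proof -
  have "mu i \<le> la i \<and> (la i \<le> la i \<or> t \<le> entry_pos i (la i))"
    using mu_le_la by simp
  then show "mu i \<le> R t i \<and> (la i \<le> R t i \<or> t \<le> entry_pos i (R t i))" "R t i \<le> la i"
    unfolding filling_chain_def by (fact LeastI Least_le)+
qed

lemma less_filling_chain_iff:
  assumes "mu i \<le> j"
  shows "j < R t i \<longleftrightarrow> j < la i \<and> entry_pos i j < t"
proof
  assume "j < R t i"
  then have "\<not> (mu i \<le> j \<and> (la i \<le> j \<or> t \<le> entry_pos i j))"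
    unfolding filling_chain_def by (rule not_less_Least)
  then show "j < la i \<and> entry_pos i j < t"
    using assms by auto
next
  assume j: "j < la i \<and> entry_pos i j < t"
  show "j < R t i"
  proof (rule ccontr)
    assume "\<not> j < R t i"
    moreover have "entry_pos i (R t i) \<le> entry_pos i j" if "R t i \<le> j"
      using entry_pos_mono[of i "R t i" i j] filling_chain_spec[of i t] that j assms
      unfolding skew_cells_def by auto
    ultimately show False
      using j filling_chain_spec[of i t] by auto
  qed
qed

lemma filling_chain_start: "R 0 = mu"
proof
  fix i show "R 0 i = mu i"
    unfolding filling_chain_def by (rule Least_equality) auto
qed

lemma filling_chain_end:
  assumes "n \<le> t"
  shows "R t = la"
proof
  fix i
  have "la i \<le> R t i"
  proof (rule ccontr)
    assume "\<not> la i \<le> R t i"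
    then have "(i, R t i) \<in> skew_cells la mu"
      using filling_chain_spec unfolding skew_cells_def by auto
    then show False
      using tableau_entry filling_chain_spec[of i t] assms \<open>\<not> la i \<le> R t i\<close> by fastforce
  qed
  then show "R t i = la i"
    using filling_chain_le_la by (rule antisym[rotated])
qed

lemma filling_chain_row_below:
  assumes "R t i < R t' (Suc i)"
  defines "j \<equiv> R t i"
  shows "(i, j) \<in> skew_cells la mu" "(Suc i, j) \<in> skew_cells la mu"
    and "t \<le> entry_pos i j" "entry_pos i j \<le> entry_pos (Suc i) j" "entry_pos (Suc i) j < t'"
proof -
  have mu_i: "mu i \<le> j"
    using filling_chain_spec unfolding j_def by blast
  moreover have mu_Suc: "mu (Suc i) \<le> j"
    using mu_i antimonoD[OF antimono_mu, of i "Suc i"] by simp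
  ultimately have below: "j < la (Suc i) \<and> entry_pos (Suc i) j < t'"
    using less_filling_chain_iff assms(1) unfolding j_def by blast
  then show cells: "(i, j) \<in> skew_cells la mu" "(Suc i, j) \<in> skew_cells la mu"
    using mu_i mu_Suc antimonoD[OF antimono_la, of i "Suc i"] unfolding skew_cells_def by auto
  then show "t \<le> entry_pos i j"
    using less_filling_chain_iff[OF mu_i, of t] unfolding skew_cells_def j_def by auto
  show "entry_pos i j \<le> entry_pos (Suc i) j"
    using entry_pos_mono[OF cells] by simp
  show "entry_pos (Suc i) j < t'"
    using below by simp
qed

lemma filling_chain_antimono: "antimono (R t)"
  unfolding antimono_iff_le_Suc
proof
  fix i show "R t (Suc i) \<le> R t i"
    using filling_chain_row_below[of t i t] by (meson not_le order.strict_trans1)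
qed

lemma filling_chain_Suc_ge: "R t i \<le> R (Suc t) i"
  using less_filling_chain_iff[of i "R (Suc t) i" t] less_filling_chain_iff[of i "R (Suc t) i" "Suc t"]
    filling_chain_spec[of i "Suc t"] by (cases "R t i \<le> R (Suc t) i") auto

lemma tableau_slot:
  assumes "mu i \<le> j" "R t i \<le> j" "j < R (Suc t) i"
  shows "T (i, j) = Some (L ! t)" "(i, j) \<in> skew_cells la mu"
proof -
  have "j < la i" "entry_pos i j = t"
    using less_filling_chain_iff[OF assms(1), of t] less_filling_chain_iff[OF assms(1), of "Suc t"] assms
    by auto
  then show "(i, j) \<in> skew_cells la mu" "T (i, j) = Some (L ! t)"
    using assms tableau_entry unfolding skew_cells_def by auto
qed

lemma filling_chain_marked_step:
  assumes "L ! t = (v, True)"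
  shows "R (Suc t) i \<le> Suc (R t i)"
proof (rule ccontr)
  assume "\<not> R (Suc t) i \<le> Suc (R t i)"
  then have "{R t i, Suc (R t i)} \<subseteq> {j. T (i, j) = Some (v, True)}"
    using tableau_slot(1)[of i "R t i" t] tableau_slot(1)[of i "Suc (R t i)" t]
      filling_chain_spec[of i t] assms by auto
  then have "card {R t i, Suc (R t i)} \<le> card {j. T (i, j) = Some (v, True)}"
    using finite_row_entries by (rule card_mono[rotated])
  then show False
    using tableau_marked_in_row[of i v] by simp
qed

lemma filling_chain_unmarked_step:
  assumes "L ! t = (v, False)"
  shows "R (Suc t) (Suc i) \<le> R t i"
proof (rule ccontr)
  assume "\<not> R (Suc t) (Suc i) \<le> R t i"
  then have "R t i < R (Suc t) (Suc i)"
    by simp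
  note below = filling_chain_row_below[OF this]
  then have "entry_pos i (R t i) = t" "entry_pos (Suc i) (R t i) = t"
    by simp_all
  then have "{i, Suc i} \<subseteq> {i'. T (i', R t i) = Some (v, False)}"
    using tableau_entry[OF below(1)] tableau_entry[OF below(2)] assms by simp
  then have "card {i, Suc i} \<le> card {i'. T (i', R t i) = Some (v, False)}"
    using finite_column_entries by (rule card_mono[rotated])
  then show False
    using tableau_unmarked_in_column[of "R t i" v] by simp
qed

lemma filling_chain_strip: "strip (snd (L ! t)) (R t) (R (Suc t))"
  using filling_chain_Suc_ge filling_chain_marked_step[of t] filling_chain_unmarked_step[of t]
  unfolding strip_def by (cases "L ! t"; cases "snd (L ! t)") auto

lemma shape_chain_filling_chain: "shape_chain L mu la R"
  unfolding shape_chain_def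
  using filling_chain_start filling_chain_end filling_chain_antimono filling_chain_strip by blast

lemma chain_filling_filling_chain: "chain_filling L R = T"
proof
  fix c :: "nat \<times> nat"
  obtain i j where c: "c = (i, j)"
    by fastforce
  show "chain_filling L R c = T c"
  proof (cases "(i, j) \<in> skew_cells la mu")
    case False
    then have "chain_filling L R (i, j) = None"
      using chain_filling_defined[OF shape_chain_filling_chain, of i j] by blast
    moreover have "T (i, j) = None"
      using tableau_on_T False unfolding tableau_on_def by blast
    ultimately show ?thesis
      using c by simp
  next
    case True
    then have j: "mu i \<le> j" "j < la i"
      unfolding skew_cells_def by auto
    then have "R (entry_pos i j) i \<le> j" "j < R (Suc (entry_pos i j)) i"
      using less_filling_chain_iff[OF j(1)] by (auto simp flip: not_less)
    then have "chain_filling L R (i, j) = Some (L ! entry_pos i j)"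
      using chain_filling_eq_Some_iff[OF shape_chain_filling_chain] tableau_entry[OF True] by blast
    then show ?thesis
      using c tableau_entry[OF True] by simp
  qed
qed

end

lemma bij_betw_chain_filling:
  "bij_betw (chain_filling L) {S. shape_chain L mu la S} (list_tableaux L (skew_cells la mu))"
  by (rule bij_betw_byWitness[where f'="filling_chain L mu la"])
    (auto simp: filling_chain_chain_filling chain_filling_filling_chain
      intro: chain_filling_in_list_tableaux shape_chain_filling_chain)


lemma bij_betw_filling_chain:
  "bij_betw (filling_chain L mu la) (list_tableaux L (skew_cells la mu)) {S. shape_chain L mu la S}"
  by (rule bij_betw_byWitness[where f'="chain_filling L"])
    (auto simp: filling_chain_chain_filling chain_filling_filling_chain
      intro: chain_filling_in_list_tableaux shape_chain_filling_chain)
end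

section \<open>Swapping two adjacent letters\<close>

lemma bij_betw_update_coordinate:
  fixes P Q :: "('i \<Rightarrow> 'b) set" and k :: 'i
  assumes X: "\<And>S. S \<in> P \<Longrightarrow> S k \<in> X S" and Y: "\<And>S. S \<in> Q \<Longrightarrow> S k \<in> Y S"
    and P_Q: "\<And>S y. S \<in> P \<Longrightarrow> y \<in> Y S \<Longrightarrow> S(k := y) \<in> Q"
    and Q_P: "\<And>S x. S \<in> Q \<Longrightarrow> x \<in> X S \<Longrightarrow> S(k := x) \<in> P"
    and G: "\<And>S. S \<in> P \<union> Q \<Longrightarrow> bij_betw (G S) (X S) (Y S)"
    and invariant: "\<And>S x. X (S(k := x)) = X S" "\<And>S x. Y (S(k := x)) = Y S" "\<And>S x. G (S(k := x)) = G S"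
  shows "bij_betw (\<lambda>S. S(k := G S (S k))) P Q"
proof (rule bij_betw_byWitness[where f'="\<lambda>S. S(k := inv_into (X S) (G S) (S k))"])
  show "\<forall>S\<in>P. (S(k := G S (S k)))(k := inv_into (X (S(k := G S (S k)))) (G (S(k := G S (S k))))
      ((S(k := G S (S k))) k)) = S"
    using X G invariant by (simp add: bij_betw_def inv_into_f_f)
  show "\<forall>S\<in>Q. (S(k := inv_into (X S) (G S) (S k)))(k := G (S(k := inv_into (X S) (G S) (S k)))
      ((S(k := inv_into (X S) (G S) (S k))) k)) = S"
    using Y G invariant by (simp add: bij_betw_def f_inv_into_f)
  show "(\<lambda>S. S(k := G S (S k))) ` P \<subseteq> Q"
  proof
    fix S' assume "S' \<in> (\<lambda>S. S(k := G S (S k))) ` P"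
    then obtain S where "S \<in> P" "S' = S(k := G S (S k))"
      by blast
    moreover have "G S (S k) \<in> Y S"
      using bij_betw_apply[OF G X] \<open>S \<in> P\<close> by blast
    ultimately show "S' \<in> Q"
      using P_Q by blast
  qed
  show "(\<lambda>S. S(k := inv_into (X S) (G S) (S k))) ` Q \<subseteq> P"
  proof
    fix S' assume "S' \<in> (\<lambda>S. S(k := inv_into (X S) (G S) (S k))) ` Q"
    then obtain S where "S \<in> Q" "S' = S(k := inv_into (X S) (G S) (S k))"
      by blast
    moreover have "inv_into (X S) (G S) (S k) \<in> X S"
      using Y[OF \<open>S \<in> Q\<close>] G[of S] \<open>S \<in> Q\<close> unfolding bij_betw_def by (blast intro: inv_into_into)
    ultimately show "S' \<in> P"
      using Q_P by blast
  qed
qed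

lemma shape_chain_middle:
  assumes "shape_chain L mu la S" "Suc t < length L"
  shows "S (Suc t) \<in> middle_shapes (snd (L ! t)) (snd (L ! Suc t)) (S t) (S (Suc (Suc t)))"
  using assms unfolding shape_chain_def middle_shapes_def by auto

lemma shape_chain_update:
  assumes chain: "shape_chain L mu la S" and len: "length L' = length L" and t: "Suc t < length L"
    and others: "\<And>u. u \<noteq> t \<Longrightarrow> u \<noteq> Suc t \<Longrightarrow> L' ! u = L ! u"
    and m: "m \<in> middle_shapes (snd (L' ! t)) (snd (L' ! Suc t)) (S t) (S (Suc (Suc t)))"
  shows "shape_chain L' mu la (S(Suc t := m))"
  unfolding shape_chain_def
proof (intro conjI allI impI)
  fix u assume "u < length L'"
  then show "strip (snd (L' ! u)) ((S(Suc t := m)) u) ((S(Suc t := m)) (Suc u))"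
    using chain m others[of u] len unfolding shape_chain_def middle_shapes_def
    by (cases "u = t"; cases "u = Suc t") auto
qed (use chain m len t in \<open>auto simp: shape_chain_def middle_shapes_def\<close>)

lemma nth_swap_adjacent:
  "(xs @ a # b # ys) ! length xs = a" "(xs @ a # b # ys) ! Suc (length xs) = b"
  "u \<noteq> length xs \<Longrightarrow> u \<noteq> Suc (length xs) \<Longrightarrow> (xs @ b # a # ys) ! u = (xs @ a # b # ys) ! u"
proof -
  show "(xs @ a # b # ys) ! length xs = a" "(xs @ a # b # ys) ! Suc (length xs) = b"
    by (simp_all add: nth_append)
  assume "u \<noteq> length xs" "u \<noteq> Suc (length xs)"
  then consider "u < length xs" | k where "u = Suc (Suc (length xs)) + k"
    by (metis add_Suc_shift le_Suc_ex not_less_eq_eq not_le_imp_less le_neq_implies_less Suc_leI)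
  then show "(xs @ b # a # ys) ! u = (xs @ a # b # ys) ! u"
    by cases (simp_all add: nth_append)
qed

context skew_diagram
begin

lemma ordered_skew_diagram: "distinct L \<Longrightarrow> ordered_skew_diagram la mu N L"
  by (simp add: ordered_skew_diagram_def ordered_skew_diagram_axioms_def skew_diagram_axioms)

text \<open>Replacing the middle shape \<open>m\<close> by \<open>g\<close> with \<open>|g| + |m| = |A| + |B|\<close> gives the letter just
  moved to position \<open>t\<close> the size of \<open>g/A\<close>, which is \<open>|B/m|\<close>, and vice versa.\<close>

lemma letter_count_chain_filling_swap:
  assumes dist: "distinct (xs @ a # b # ys)" and t: "t = length xs"
    and S: "shape_chain (xs @ a # b # ys) mu la S"
    and S': "shape_chain (xs @ b # a # ys) mu la (S(Suc t := g))"
    and sizes: "shape_size N g + shape_size N (S (Suc t)) = shape_size N (S t) + shape_size N (S (Suc (Suc t)))"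
  shows "letter_count (chain_filling (xs @ b # a # ys) (S(Suc t := g))) = letter_count (chain_filling (xs @ a # b # ys) S)"
proof
  fix c
  define L L' where "L = xs @ a # b # ys" and "L' = xs @ b # a # ys"
  interpret A: ordered_skew_diagram la mu N L
    using dist unfolding L_def by (rule ordered_skew_diagram)
  interpret B: ordered_skew_diagram la mu N L'
    using dist unfolding L'_def by (intro ordered_skew_diagram) auto
  have S: "shape_chain L mu la S" and S': "shape_chain L' mu la (S(Suc t := g))"
    using S S' unfolding L_def L'_def .
  have nth: "L ! t = L' ! Suc t" "L ! Suc t = L' ! t" "\<And>u. u \<noteq> t \<Longrightarrow> u \<noteq> Suc t \<Longrightarrow> L ! u = L' ! u"
    unfolding L_def L'_def t using nth_swap_adjacent[where xs=xs and a=a and b=b and ys=ys] nth_swap_adjacent[where xs=xs and a=b and b=a and ys=ys] by simp_all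
  have len: "Suc t < length L" "length L' = length L"
    unfolding L_def L'_def t by simp_all
  have mono: "shape_size N (S t) \<le> shape_size N (S (Suc t))" "shape_size N (S t) \<le> shape_size N g"
    "shape_size N g \<le> shape_size N (S (Suc (Suc t)))"
    using A.chain_mono[OF S, of t "Suc t"] B.chain_mono[OF S', of t "Suc t"]
      B.chain_mono[OF S', of "Suc t" "Suc (Suc t)"] by (auto intro!: shape_size_mono)
  have "letter_count (chain_filling L' (S(Suc t := g))) (L ! u) = letter_count (chain_filling L S) (L ! u)"
    if "u < length L" for u
  proof -
    consider "u = t" | "u = Suc t" | "u \<noteq> t" "u \<noteq> Suc t"
      by blast
    then show ?thesis
    proof cases
      case 1
      then show ?thesis
        using len nth(1) sizes mono A.letter_count_chain_filling[OF S, of t]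
          B.letter_count_chain_filling[OF S', of "Suc t"] by simp
    next
      case 2
      then show ?thesis
        using len nth(2) sizes mono A.letter_count_chain_filling[OF S, of "Suc t"]
          B.letter_count_chain_filling[OF S', of t] by simp
    next
      case 3
      then show ?thesis
        using that len nth(3) A.letter_count_chain_filling[OF S, of u]
          B.letter_count_chain_filling[OF S', of u] by simp
    qed
  qed
  moreover have "c \<notin> set L' \<longleftrightarrow> c \<notin> set L"
    unfolding L_def L'_def by auto
  ultimately show "letter_count (chain_filling L' (S(Suc t := g))) c = letter_count (chain_filling L S) c"
    using A.letter_count_chain_filling_notin[OF S] B.letter_count_chain_filling_notin[OF S']
    by (metis in_set_conv_nth)
qed

definition replace_middle :: "(shape \<Rightarrow> shape \<Rightarrow> shape \<Rightarrow> shape) \<Rightarrow> nat \<Rightarrow> (nat \<Rightarrow> shape) \<Rightarrow> nat \<Rightarrow> shape"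
  where
  "replace_middle G t S = S(Suc t := G (S t) (S (Suc (Suc t))) (S (Suc t)))"

context
  fixes xs ys :: "letter list" and a b :: letter
    and G :: "shape \<Rightarrow> shape \<Rightarrow> shape \<Rightarrow> shape"
  assumes dist: "distinct (xs @ a # b # ys)"
    and G: "\<And>A B. antimono A \<Longrightarrow> antimono B \<Longrightarrow> (\<And>i. A i \<le> B i) \<Longrightarrow> (\<And>i. N \<le> i \<Longrightarrow> B i = 0) \<Longrightarrow>
      bij_betw (G A B) (middle_shapes (snd a) (snd b) A B) (middle_shapes (snd b) (snd a) A B) \<and>
      (\<forall>m\<in>middle_shapes (snd a) (snd b) A B. shape_size N (G A B m) + shape_size N m = shape_size N A + shape_size N B)"
begin

interpretation A: ordered_skew_diagram la mu N "xs @ a # b # ys"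
  using dist by (rule ordered_skew_diagram)

interpretation B: ordered_skew_diagram la mu N "xs @ b # a # ys"
  using dist by (intro ordered_skew_diagram) auto

lemma swap_positions:
  "(xs @ a # b # ys) ! length xs = a" "(xs @ a # b # ys) ! Suc (length xs) = b"
  "(xs @ b # a # ys) ! length xs = b" "(xs @ b # a # ys) ! Suc (length xs) = a"
  "\<And>u. u \<noteq> length xs \<Longrightarrow> u \<noteq> Suc (length xs) \<Longrightarrow> (xs @ b # a # ys) ! u = (xs @ a # b # ys) ! u"
  "Suc (length xs) < length (xs @ a # b # ys)" "length (xs @ b # a # ys) = length (xs @ a # b # ys)"
  using nth_swap_adjacent[where xs=xs and a=a and b=b and ys=ys]
    nth_swap_adjacent[where xs=xs and a=b and b=a and ys=ys] by simp_all

lemma G_on_shape_chain: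
  assumes "shape_chain (xs @ a # b # ys) mu la S \<or> shape_chain (xs @ b # a # ys) mu la S"
  defines "A \<equiv> S (length xs)" and "B \<equiv> S (Suc (Suc (length xs)))"
  shows "bij_betw (G A B) (middle_shapes (snd a) (snd b) A B) (middle_shapes (snd b) (snd a) A B) \<and>
    (\<forall>m\<in>middle_shapes (snd a) (snd b) A B. shape_size N (G A B m) + shape_size N m = shape_size N A + shape_size N B)"
  using assms(1)
proof
  assume S: "shape_chain (xs @ a # b # ys) mu la S"
  show ?thesis
    unfolding A_def B_def by (rule G) (use A.chain_antimono[OF S] A.chain_mono[OF S] A.chain_vanishes[OF S] in auto)
next
  assume S: "shape_chain (xs @ b # a # ys) mu la S"
  show ?thesis
    unfolding A_def B_def by (rule G) (use B.chain_antimono[OF S] B.chain_mono[OF S] B.chain_vanishes[OF S] in auto)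
qed

lemma bij_betw_replace_middle:
  "bij_betw (replace_middle G (length xs)) {S. shape_chain (xs @ a # b # ys) mu la S} {S. shape_chain (xs @ b # a # ys) mu la S}"
  unfolding replace_middle_def
proof (rule bij_betw_update_coordinate[where X="\<lambda>S. middle_shapes (snd a) (snd b) (S (length xs)) (S (Suc (Suc (length xs))))"
      and Y="\<lambda>S. middle_shapes (snd b) (snd a) (S (length xs)) (S (Suc (Suc (length xs))))"])
  show "S (Suc (length xs)) \<in> middle_shapes (snd a) (snd b) (S (length xs)) (S (Suc (Suc (length xs))))"
    if "S \<in> {S. shape_chain (xs @ a # b # ys) mu la S}" for S
    using shape_chain_middle[of "xs @ a # b # ys" mu la S "length xs"] that swap_positions by simp
  show "S (Suc (length xs)) \<in> middle_shapes (snd b) (snd a) (S (length xs)) (S (Suc (Suc (length xs))))"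
    if "S \<in> {S. shape_chain (xs @ b # a # ys) mu la S}" for S
    using shape_chain_middle[of "xs @ b # a # ys" mu la S "length xs"] that swap_positions by simp
  show "S(Suc (length xs) := m) \<in> {S. shape_chain (xs @ b # a # ys) mu la S}"
    if "S \<in> {S. shape_chain (xs @ a # b # ys) mu la S}"
      "m \<in> middle_shapes (snd b) (snd a) (S (length xs)) (S (Suc (Suc (length xs))))" for S m
    using shape_chain_update[of "xs @ a # b # ys" mu la S "xs @ b # a # ys" "length xs" m] that swap_positions by simp
  show "S(Suc (length xs) := m) \<in> {S. shape_chain (xs @ a # b # ys) mu la S}"
    if "S \<in> {S. shape_chain (xs @ b # a # ys) mu la S}"
      "m \<in> middle_shapes (snd a) (snd b) (S (length xs)) (S (Suc (Suc (length xs))))" for S m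
    using shape_chain_update[of "xs @ b # a # ys" mu la S "xs @ a # b # ys" "length xs" m] that swap_positions by simp
qed (use G_on_shape_chain in auto)

lemma letter_count_replace_middle:
  assumes S: "shape_chain (xs @ a # b # ys) mu la S"
  shows "letter_count (chain_filling (xs @ b # a # ys) (replace_middle G (length xs) S))
    = letter_count (chain_filling (xs @ a # b # ys) S)"
proof -
  have "S (Suc (length xs)) \<in> middle_shapes (snd a) (snd b) (S (length xs)) (S (Suc (Suc (length xs))))"
    using shape_chain_middle[OF S swap_positions(6)] swap_positions(1,2) by simp
  then show ?thesis
    using letter_count_chain_filling_swap[OF dist refl S] bij_betw_replace_middle S G_on_shape_chain[of S]
    unfolding replace_middle_def by (auto dest: bij_betw_apply)
qed

end

lemma adjacent_swap_bij:
  assumes dist: "distinct (xs @ a # b # ys)" and not_both_marked: "\<not> (snd a \<and> snd b)"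
  shows "\<exists>f. bij_betw f (list_tableaux (xs @ a # b # ys) (skew_cells la mu)) (list_tableaux (xs @ b # a # ys) (skew_cells la mu)) \<and>
    (\<forall>T\<in>list_tableaux (xs @ a # b # ys) (skew_cells la mu). letter_count (f T) = letter_count T)"
proof -
  define L L' where "L = xs @ a # b # ys" and "L' = xs @ b # a # ys"
  interpret A: ordered_skew_diagram la mu N L
    using dist unfolding L_def by (rule ordered_skew_diagram)
  interpret B: ordered_skew_diagram la mu N L'
    using dist unfolding L'_def by (intro ordered_skew_diagram) auto
  obtain G where "\<And>A B. antimono A \<Longrightarrow> antimono B \<Longrightarrow> (\<And>i. A i \<le> B i) \<Longrightarrow> (\<And>i. N \<le> i \<Longrightarrow> B i = 0) \<Longrightarrow>
      bij_betw (G A B) (middle_shapes (snd a) (snd b) A B) (middle_shapes (snd b) (snd a) A B) \<and>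
      (\<forall>m\<in>middle_shapes (snd a) (snd b) A B. shape_size N (G A B m) + shape_size N m = shape_size N A + shape_size N B)"
    using middle_shapes_swap_fun[OF not_both_marked] by blast
  note swap = bij_betw_replace_middle[OF dist this] letter_count_replace_middle[OF dist this]
  define \<Phi> where "\<Phi> = replace_middle G (length xs)"
  have \<Phi>: "bij_betw \<Phi> {S. shape_chain L mu la S} {S. shape_chain L' mu la S}"
    and counts: "\<And>S. shape_chain L mu la S \<Longrightarrow> letter_count (chain_filling L' (\<Phi> S)) = letter_count (chain_filling L S)"
    using swap unfolding \<Phi>_def L_def L'_def by blast+
  have "bij_betw (chain_filling L' \<circ> (\<Phi> \<circ> filling_chain L mu la))
      (list_tableaux L (skew_cells la mu)) (list_tableaux L' (skew_cells la mu))"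
    by (rule bij_betw_trans[OF bij_betw_trans[OF A.bij_betw_filling_chain \<Phi>] B.bij_betw_chain_filling])
  moreover have "letter_count ((chain_filling L' \<circ> (\<Phi> \<circ> filling_chain L mu la)) T) = letter_count T"
    if "T \<in> list_tableaux L (skew_cells la mu)" for T
    using counts[OF A.shape_chain_filling_chain[OF that]] A.chain_filling_filling_chain[OF that] by simp
  ultimately show ?thesis
    unfolding L_def L'_def by blast
qed

end

section \<open>Transposition and conjugate shapes\<close>

definition flip :: "letter \<Rightarrow> letter" where
  "flip a = (fst a, \<not> snd a)"

definition transpose_filling :: "filling \<Rightarrow> filling" where
  "transpose_filling T = (\<lambda>(i, j). map_option flip (T (j, i)))"

lemma flip_flip [simp]: "flip (flip a) = a"
  unfolding flip_def by simp

lemma flip_eq_iff: "flip a = b \<longleftrightarrow> a = flip b"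
  by auto

lemma transpose_filling_eq_Some_iff: "transpose_filling T (i, j) = Some a \<longleftrightarrow> T (j, i) = Some (flip a)"
  unfolding transpose_filling_def by (cases "T (j, i)") (auto simp: flip_eq_iff)

lemma transpose_filling_transpose_filling [simp]: "transpose_filling (transpose_filling T) = T"
  unfolding transpose_filling_def by (auto simp: option.map_comp comp_def option.map_ident)

text \<open>Transposing exchanges rows and columns and, through \<open>flip\<close>, marked and unmarked letters,
  so the two strictness conditions are exchanged as well.\<close>

lemma tableau_on_transpose_filling:
  assumes "tableau_on rk P C T"
  shows "tableau_on (rk \<circ> flip) (P \<circ> flip) (prod.swap ` C) (transpose_filling T)"
  unfolding tableau_on_def
proof (intro conjI allI impI)
  fix c :: "nat \<times> nat"
  show "transpose_filling T c \<noteq> None \<longleftrightarrow> c \<in> prod.swap ` C"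
    using assms unfolding tableau_on_def transpose_filling_def by (cases c) force
next
  fix r v
  have "{j. transpose_filling T (r, j) = Some (v, True)} = {j. T (j, r) = Some (v, False)}"
    by (simp add: transpose_filling_eq_Some_iff flip_def)
  then show "card {j. transpose_filling T (r, j) = Some (v, True)} \<le> 1"
    using assms unfolding tableau_on_def by simp
next
  fix col v
  have "{i. transpose_filling T (i, col) = Some (v, False)} = {i. T (col, i) = Some (v, True)}"
    by (simp add: transpose_filling_eq_Some_iff flip_def)
  then show "card {i. transpose_filling T (i, col) = Some (v, False)} \<le> 1"
    using assms unfolding tableau_on_def by simp
next
  fix c a assume a: "transpose_filling T c = Some a"
  obtain i j where "c = (i, j)"
    by fastforce
  then have "T (j, i) = Some (flip a)"
    using a transpose_filling_eq_Some_iff by simp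
  then show "(P \<circ> flip) a"
    using assms unfolding tableau_on_def comp_def by blast
next
  fix i j j' a b assume "transpose_filling T (i, j) = Some a \<and> transpose_filling T (i, j') = Some b \<and> j \<le> j'"
  then show "(rk \<circ> flip) a \<le> (rk \<circ> flip) b"
    using assms unfolding tableau_on_def transpose_filling_eq_Some_iff comp_def by blast
next
  fix i i' j a b assume "transpose_filling T (i, j) = Some a \<and> transpose_filling T (i', j) = Some b \<and> i \<le> i'"
  then show "(rk \<circ> flip) a \<le> (rk \<circ> flip) b"
    using assms unfolding tableau_on_def transpose_filling_eq_Some_iff comp_def by blast
qed

lemma pos_map_flip: "pos (map flip L) a = pos L (flip a)"
  unfolding pos_def by (intro arg_cong[where f=Least] ext) (auto simp: flip_eq_iff)

lemma in_set_map_flip: "a \<in> set (map flip L) \<longleftrightarrow> flip a \<in> set L"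
  by (auto intro: rev_image_eqI[of "flip a"])

lemma transpose_filling_in_list_tableaux:
  assumes "T \<in> list_tableaux L C"
  shows "transpose_filling T \<in> list_tableaux (map flip L) (prod.swap ` C)"
proof -
  have "(\<lambda>a. a \<in> set (map flip L)) = (\<lambda>a. a \<in> set L) \<circ> flip"
    by (simp add: fun_eq_iff in_set_map_flip del: set_map)
  moreover have "(\<lambda>a. int (pos (map flip L) a)) = (\<lambda>a. int (pos L a)) \<circ> flip"
    by (simp add: fun_eq_iff pos_map_flip)
  ultimately show ?thesis
    using tableau_on_transpose_filling assms unfolding list_tableaux_def by fastforce
qed

lemma bij_betw_transpose_filling: "bij_betw transpose_filling (list_tableaux L C) (list_tableaux (map flip L) (prod.swap ` C))"
proof (rule bij_betw_byWitness[where f'=transpose_filling])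
  have "map flip (map flip L) = L" "prod.swap ` prod.swap ` C = C"
    by (simp_all add: image_comp comp_def)
  then show "transpose_filling ` list_tableaux (map flip L) (prod.swap ` C) \<subseteq> list_tableaux L C"
    using transpose_filling_in_list_tableaux[of _ "map flip L" "prod.swap ` C"] by force
qed (auto intro: transpose_filling_in_list_tableaux)

lemma letter_count_transpose_filling: "letter_count (transpose_filling T) a = letter_count T (flip a)"
proof -
  have "{c. transpose_filling T c = Some a} = prod.swap ` {c. T c = Some (flip a)}"
    by (auto simp: transpose_filling_eq_Some_iff image_iff)
  then show ?thesis
    unfolding letter_count_def by (simp add: card_image)
qed

definition conjugate :: "shape \<Rightarrow> shape" where
  "conjugate f j = card {i. j < f i}"

lemma less_conjugate_iff:
  assumes "antimono f" "\<And>i. N \<le> i \<Longrightarrow> f i = 0"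
  shows "i < conjugate f j \<longleftrightarrow> j < f i"
proof -
  have ex: "\<exists>i. \<not> j < f i"
    using assms(2)[of N] by (intro exI[of _ N]) simp
  define k where "k = (LEAST i. \<not> j < f i)"
  have "j < f i \<longleftrightarrow> i < k" for i
  proof
    assume "j < f i"
    moreover have "\<not> j < f k"
      unfolding k_def using LeastI_ex[OF ex] .
    ultimately show "i < k"
      using antimonoD[OF assms(1), of k i] by (cases "k \<le> i") auto
  qed (use not_less_Least[of _ "\<lambda>i. \<not> j < f i"] k_def in blast)
  then have "{i. j < f i} = {..<k}"
    by auto
  then show ?thesis
    unfolding conjugate_def using \<open>\<And>i. j < f i \<longleftrightarrow> i < k\<close> by simp
qed

lemma finite_conjugate_set:
  fixes f :: shape
  assumes "\<And>i. N \<le> i \<Longrightarrow> f i = 0"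
  shows "finite {i. j < f i}"
proof (rule finite_subset)
  show "{i. j < f i} \<subseteq> {..<N}"
  proof
    fix i assume "i \<in> {i. j < f i}"
    then show "i \<in> {..<N}"
      using assms[of i] by (cases "N \<le> i") (auto simp: not_le)
  qed
qed simp

lemma antimono_conjugate:
  assumes "\<And>i. N \<le> i \<Longrightarrow> f i = 0"
  shows "antimono (conjugate f)"
proof (rule antimonoI)
  fix j j' :: nat assume "j \<le> j'"
  then show "conjugate f j' \<le> conjugate f j"
    unfolding conjugate_def using finite_conjugate_set[OF assms] by (intro card_mono) auto
qed

lemma (in skew_diagram) conjugate_skew_diagram: "skew_diagram (conjugate la) (conjugate mu) (la 0)"
proof
  show "antimono (conjugate la)" "antimono (conjugate mu)"
    using antimono_conjugate la_vanishes mu_vanishes by blast+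
  show "conjugate mu j \<le> conjugate la j" for j
    unfolding conjugate_def using finite_conjugate_set[OF la_vanishes] mu_le_la
    by (intro card_mono) (auto intro: less_le_trans)
  show "conjugate la j = 0" if "la 0 \<le> j" for j
  proof -
    have "la i \<le> j" for i
      using antimonoD[OF antimono_la, of 0 i] that by simp
    then have "{i. j < la i} = {}"
      using leD by blast
    then show ?thesis
      unfolding conjugate_def by simp
  qed
qed

lemma (in skew_diagram) skew_cells_conjugate: "skew_cells (conjugate la) (conjugate mu) = prod.swap ` skew_cells la mu"
  unfolding skew_cells_def
    using less_conjugate_iff[OF antimono_la la_vanishes] less_conjugate_iff[OF antimono_mu mu_vanishes]
  by (auto simp: image_iff not_le[symmetric])

text \<open>Two marked letters, which add vertical strips, are swapped by transposing: this turns them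
  into unmarked letters on the conjugate shape, where the previous case applies.\<close>

lemma (in skew_diagram) adjacent_swap_bij_marked:
  assumes dist: "distinct (xs @ a # b # ys)" and marked: "snd a" "snd b"
  shows "\<exists>f. bij_betw f (list_tableaux (xs @ a # b # ys) (skew_cells la mu)) (list_tableaux (xs @ b # a # ys) (skew_cells la mu)) \<and>
    (\<forall>T\<in>list_tableaux (xs @ a # b # ys) (skew_cells la mu). letter_count (f T) = letter_count T)"
proof -
  define L L' C where "L = xs @ a # b # ys" and "L' = xs @ b # a # ys" and "C = skew_cells la mu"
  interpret conjugate: skew_diagram "conjugate la" "conjugate mu" "la 0"
    by (rule conjugate_skew_diagram)
  have "inj_on flip (set (xs @ a # b # ys))"
    by (rule inj_onI) (metis flip_flip)
  then have "distinct (map flip (xs @ a # b # ys))"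
    using dist unfolding distinct_map by blast
  then have "distinct (map flip xs @ flip a # flip b # map flip ys)"
    by simp
  moreover have "\<not> (snd (flip a) \<and> snd (flip b))"
    using marked by (simp add: flip_def)
  moreover have "map flip L = map flip xs @ flip a # flip b # map flip ys"
    "map flip L' = map flip xs @ flip b # flip a # map flip ys"
    "prod.swap ` C = skew_cells (conjugate la) (conjugate mu)"
    unfolding L_def L'_def C_def skew_cells_conjugate by simp_all
  ultimately obtain g where
    g: "bij_betw g (list_tableaux (map flip L) (prod.swap ` C)) (list_tableaux (map flip L') (prod.swap ` C))"
      "\<forall>T\<in>list_tableaux (map flip L) (prod.swap ` C). letter_count (g T) = letter_count T"
    using conjugate.adjacent_swap_bij by metis
  have "bij_betw (transpose_filling \<circ> (g \<circ> transpose_filling)) (list_tableaux L C) (list_tableaux L' C)"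
    using bij_betw_transpose_filling[of "map flip L'" "prod.swap ` C"]
    by (intro bij_betw_trans[OF bij_betw_trans[OF bij_betw_transpose_filling g(1)]])
      (simp add: image_comp comp_def)
  moreover have "letter_count ((transpose_filling \<circ> (g \<circ> transpose_filling)) T) = letter_count T"
    if "T \<in> list_tableaux L C" for T
  proof
    fix c
    have "letter_count (g (transpose_filling T)) (flip c) = letter_count (transpose_filling T) (flip c)"
      using g(2) bij_betw_apply[OF bij_betw_transpose_filling that] by simp
    then show "letter_count ((transpose_filling \<circ> (g \<circ> transpose_filling)) T) c = letter_count T c"
      by (simp add: letter_count_transpose_filling)
  qed
  ultimately show ?thesis
    unfolding L_def L'_def C_def by blast
qed

section \<open>From the primed to the signed order\<close>

definition weight_equivalent :: "letter list \<Rightarrow> letter list \<Rightarrow> bool" where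
  "weight_equivalent L L' \<longleftrightarrow> (\<forall>la mu N. skew_diagram la mu N \<longrightarrow>
     (\<exists>f. bij_betw f (list_tableaux L (skew_cells la mu)) (list_tableaux L' (skew_cells la mu)) \<and>
       (\<forall>T\<in>list_tableaux L (skew_cells la mu). letter_count (f T) = letter_count T)))"

lemma weight_equivalent_refl: "weight_equivalent L L"
  unfolding weight_equivalent_def by (intro allI impI exI[of _ id]) auto

lemma weight_equivalent_trans:
  assumes "weight_equivalent L1 L2" "weight_equivalent L2 L3"
  shows "weight_equivalent L1 L3"
  unfolding weight_equivalent_def
proof (intro allI impI)
  fix la mu N assume diagram: "skew_diagram la mu N"
  obtain f where f: "bij_betw f (list_tableaux L1 (skew_cells la mu)) (list_tableaux L2 (skew_cells la mu))"
    "\<forall>T\<in>list_tableaux L1 (skew_cells la mu). letter_count (f T) = letter_count T"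
    using assms(1) diagram unfolding weight_equivalent_def by blast
  obtain g where g: "bij_betw g (list_tableaux L2 (skew_cells la mu)) (list_tableaux L3 (skew_cells la mu))"
    "\<forall>T\<in>list_tableaux L2 (skew_cells la mu). letter_count (g T) = letter_count T"
    using assms(2) diagram unfolding weight_equivalent_def by blast
  show "\<exists>h. bij_betw h (list_tableaux L1 (skew_cells la mu)) (list_tableaux L3 (skew_cells la mu)) \<and>
      (\<forall>T\<in>list_tableaux L1 (skew_cells la mu). letter_count (h T) = letter_count T)"
    using bij_betw_trans[OF f(1) g(1)] f g bij_betw_apply[OF f(1)] by (intro exI[of _ "g \<circ> f"]) simp
qed

lemma weight_equivalent_swap:
  assumes dist: "distinct (xs @ a # b # ys)"
  shows "weight_equivalent (xs @ a # b # ys) (xs @ b # a # ys)"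
  unfolding weight_equivalent_def
proof (intro allI impI)
  fix la mu N assume "skew_diagram la mu N"
  then show "\<exists>f. bij_betw f (list_tableaux (xs @ a # b # ys) (skew_cells la mu)) (list_tableaux (xs @ b # a # ys) (skew_cells la mu)) \<and>
      (\<forall>T\<in>list_tableaux (xs @ a # b # ys) (skew_cells la mu). letter_count (f T) = letter_count T)"
    using skew_diagram.adjacent_swap_bij[OF _ dist] skew_diagram.adjacent_swap_bij_marked[OF _ dist]
    by (cases "snd a \<and> snd b") blast+
qed

definition adjacent_swap :: "'a list \<Rightarrow> 'a list \<Rightarrow> bool" where
  "adjacent_swap L L' \<longleftrightarrow> (\<exists>xs a b ys. L = xs @ a # b # ys \<and> L' = xs @ b # a # ys)"

lemma adjacent_swaps_Cons: "adjacent_swap\<^sup>*\<^sup>* L L' \<Longrightarrow> adjacent_swap\<^sup>*\<^sup>* (x # L) (x # L')"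
proof (induction rule: rtranclp_induct)
  case (step L' L'')
  then obtain xs a b ys where "L' = xs @ a # b # ys" "L'' = xs @ b # a # ys"
    unfolding adjacent_swap_def by blast
  then have "adjacent_swap (x # L') (x # L'')"
    unfolding adjacent_swap_def by (intro exI[of _ "x # xs"]) simp
  then show ?case
    using step.IH by simp
qed simp

lemma adjacent_swaps_move: "adjacent_swap\<^sup>*\<^sup>* (x # ys @ zs) (ys @ x # zs)"
proof (induction ys)
  case (Cons y ys)
  have "adjacent_swap (x # y # ys @ zs) (y # x # ys @ zs)"
    unfolding adjacent_swap_def by (intro exI[of _ "[]"]) auto
  then show ?case
    using adjacent_swaps_Cons[OF Cons.IH] by (simp add: converse_rtranclp_into_rtranclp)
qed simp

lemma adjacent_swaps_if_same_set:
  "distinct L1 \<Longrightarrow> distinct L2 \<Longrightarrow> set L1 = set L2 \<Longrightarrow> adjacent_swap\<^sup>*\<^sup>* L1 L2"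
proof (induction L1 arbitrary: L2)
  case (Cons x xs)
  obtain ys zs where L2: "L2 = ys @ x # zs"
    using Cons.prems by (metis list.set_intros(1) split_list)
  have "distinct (ys @ zs)" "set xs = set (ys @ zs)"
    using Cons.prems L2 by auto
  then have "adjacent_swap\<^sup>*\<^sup>* xs (ys @ zs)"
    using Cons by simp
  then show ?case
    using adjacent_swaps_Cons adjacent_swaps_move L2 by (metis rtranclp_trans)
qed simp

lemma weight_equivalent_if_adjacent_swaps:
  "adjacent_swap\<^sup>*\<^sup>* L L' \<Longrightarrow> distinct L \<Longrightarrow> weight_equivalent L L'"
proof (induction rule: rtranclp_induct)
  case (step L' L'')
  then obtain xs a b ys where "L' = xs @ a # b # ys" "L'' = xs @ b # a # ys"
    unfolding adjacent_swap_def by blast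
  moreover have "distinct L'"
    using step.hyps(1) step.prems
    by (induction rule: rtranclp_induct) (auto simp: adjacent_swap_def)
  ultimately show ?case
    using step weight_equivalent_swap weight_equivalent_trans by blast
qed (rule weight_equivalent_refl)

definition primed_order :: "nat \<Rightarrow> letter list" where
  "primed_order k = concat (map (\<lambda>v. [(v, True), (v, False)]) [1..<Suc k])"

definition signed_order :: "nat \<Rightarrow> letter list" where
  "signed_order k = map (\<lambda>v. (v, True)) (rev [1..<Suc k]) @ map (\<lambda>v. (v, False)) [1..<Suc k]"

lemma set_primed_order: "set (primed_order k) = {a. in_alphabet k a}"
  unfolding primed_order_def in_alphabet_def by (auto simp: le_Suc_eq)

lemma set_signed_order: "set (signed_order k) = {a. in_alphabet k a}"
  unfolding signed_order_def in_alphabet_def by (auto simp: image_iff)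

lemma primed_order_Suc: "primed_order (Suc k) = primed_order k @ [(Suc k, True), (Suc k, False)]"
  unfolding primed_order_def by simp

lemma sorted_primed_order: "sorted_wrt (\<lambda>x y. rank_primed x < rank_primed y) (primed_order k)"
proof (induction k)
  case (Suc k)
  have "rank_primed x < rank_primed y"
    if "x \<in> set (primed_order k)" "y \<in> set [(Suc k, True), (Suc k, False)]" for x y
    using that unfolding set_primed_order in_alphabet_def rank_primed_def by auto
  moreover have "sorted_wrt (\<lambda>x y. rank_primed x < rank_primed y) [(Suc k, True), (Suc k, False)]"
    by (simp add: rank_primed_def)
  ultimately show ?case
    using Suc.IH unfolding primed_order_Suc sorted_wrt_append by blast
qed (simp add: primed_order_def)

lemma sorted_signed_order: "sorted_wrt (\<lambda>x y. rank_signed x < rank_signed y) (signed_order k)"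
  unfolding signed_order_def sorted_wrt_append sorted_wrt_map sorted_wrt_rev
  by (auto simp del: upt_Suc simp: rank_signed_def intro: sorted_wrt_mono_rel[OF _ sorted_wrt_upt])

lemma distinct_if_sorted_rank: "sorted_wrt (\<lambda>x y. rk x < (rk y :: int)) L \<Longrightarrow> distinct L"
  by (induction L) auto

lemma pos_le_iff_rank_le:
  assumes "sorted_wrt (\<lambda>x y. rk x < (rk y :: int)) L" and "a \<in> set L" "b \<in> set L"
  shows "int (pos L a) \<le> int (pos L b) \<longleftrightarrow> rk a \<le> rk b"
proof -
  have "rk (L ! i) < rk (L ! j) \<longleftrightarrow> i < j" if "i < length L" "j < length L" for i j
    using sorted_wrt_nth_less[OF assms(1)] that by (cases i j rule: linorder_cases) force+
  then show ?thesis
    using pos_less_length_and_nth[OF assms(2)] pos_less_length_and_nth[OF assms(3)]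
    by (metis not_le of_nat_le_iff)
qed

lemma tableau_on_transfer:
  assumes T: "tableau_on rk P C T" and P_Q: "\<And>a. P a \<Longrightarrow> Q a"
    and rank: "\<And>a b. P a \<Longrightarrow> P b \<Longrightarrow> rk a \<le> rk b \<Longrightarrow> rk' a \<le> rk' b"
  shows "tableau_on rk' Q C T"
proof -
  have P: "P a" if "T c = Some a" for c a
    using T that unfolding tableau_on_def by blast
  have mono: "rk' a \<le> rk' b" if "T (i, j) = Some a" "T (i', j') = Some b" "i = i' \<and> j \<le> j' \<or> i \<le> i' \<and> j = j'"
    for i j i' j' a b
  proof -
    have "rk a \<le> rk b"
      using T that unfolding tableau_on_def by blast
    then show ?thesis
      using rank P that(1,2) by blast
  qed
  show ?thesis
    unfolding tableau_on_def
  proof (intro conjI)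
    show "\<forall>c a. T c = Some a \<longrightarrow> Q a"
      using P P_Q by blast
    show "\<forall>i j j' a b. T (i, j) = Some a \<and> T (i, j') = Some b \<and> j \<le> j' \<longrightarrow> rk' a \<le> rk' b"
      "\<forall>i i' j a b. T (i, j) = Some a \<and> T (i', j) = Some b \<and> i \<le> i' \<longrightarrow> rk' a \<le> rk' b"
      using mono by blast+
  qed (use T in \<open>simp_all add: tableau_on_def\<close>)
qed

lemma tableau_on_cong:
  assumes "\<And>a. P a \<longleftrightarrow> Q a" and "\<And>a b. P a \<Longrightarrow> P b \<Longrightarrow> rk a \<le> rk b \<longleftrightarrow> rk' a \<le> rk' b"
  shows "tableau_on rk P C T \<longleftrightarrow> tableau_on rk' Q C T"
  using tableau_on_transfer[of rk P C T Q rk'] tableau_on_transfer[of rk' Q C T P rk] assms by blast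

lemma primed_tableaux_eq: "primed_tableaux lam mu k = list_tableaux (primed_order k) (cells lam mu)"
  unfolding primed_tableaux_def list_tableaux_def tableau_wrt_eq_tableau_on
  using pos_le_iff_rank_le[OF sorted_primed_order] set_primed_order
  by (intro Collect_cong tableau_on_cong) auto

lemma signed_tableaux_eq: "signed_tableaux lam mu k = list_tableaux (signed_order k) (cells lam mu)"
  unfolding signed_tableaux_def list_tableaux_def tableau_wrt_eq_tableau_on
  using pos_le_iff_rank_le[OF sorted_signed_order] set_signed_order
  by (intro Collect_cong tableau_on_cong) auto

lemma antimono_part: "is_partition lam \<Longrightarrow> antimono (part lam)"
  unfolding antimono_iff_le_Suc is_partition_def part_def
  by (auto simp: sorted_rev_nth_mono)

lemma skew_diagram_part: "skew_shape lam mu \<Longrightarrow> skew_diagram (part lam) (part mu) (length lam)"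
  unfolding skew_shape_def by unfold_locales (auto simp: antimono_part part_def)

lemma cells_eq_skew_cells: "cells lam mu = skew_cells (part lam) (part mu)"
  unfolding cells_def skew_cells_def ..

lemma double_weight_eq_if_letter_count_eq: "letter_count T = letter_count T' \<Longrightarrow> double_weight T = double_weight T'"
  unfolding double_weight_def letter_count_def by (simp add: fun_eq_iff)

theorem corollary4p2:
  fixes lam mu :: "nat list" and k :: nat
  assumes "skew_shape lam mu"
  shows "\<exists>f. bij_betw f (primed_tableaux lam mu k) (signed_tableaux lam mu k) \<and>
             (\<forall>T \<in> primed_tableaux lam mu k. double_weight (f T) = double_weight T)"
proof -
  have "distinct (primed_order k)" "distinct (signed_order k)"
    using sorted_primed_order sorted_signed_order by (auto intro: distinct_if_sorted_rank)
  then have "adjacent_swap\<^sup>*\<^sup>* (primed_order k) (signed_order k)"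
    by (intro adjacent_swaps_if_same_set) (simp_all add: set_primed_order set_signed_order)
  then have "weight_equivalent (primed_order k) (signed_order k)"
    using weight_equivalent_if_adjacent_swaps \<open>distinct (primed_order k)\<close> by blast
  then show ?thesis
    using skew_diagram_part[OF assms] double_weight_eq_if_letter_count_eq
    unfolding weight_equivalent_def primed_tableaux_eq signed_tableaux_eq cells_eq_skew_cells
    by metis
qed

end
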